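(* Let $X=(X_n)_{n\in\mathbb{Z}}$ be $L_2$-NED with constants $\nu(k)$ on a stationary process $(Z_n)_{n\in\mathbb{Z}}$, and let $r\ge1$ be an integer. If for some $p,q\in(1,\infty)$ with $1/p+1/q=1$ we have $\mathbb{E}[|X_n|^{p(2r-1)}]<\infty$ and $X$ is $L_q$-NED on $(Z_n)$ with constants of order $O(\nu(k))$, then $(|X_n|^r)_{n\in\mathbb{Z}}$ is $L_2$-NED on $(Z_n)$ with constants of order $O(\nu(k)^{1/2})$.
   Context: $\mathcal{F}_{Z,s,t}=\sigma(Z_u:s\le u\le t)$. A stationary process $(Y_n)$ is $L_q$-NED on $(Z_n)$ with constants $\nu(k)$ if $\|Y_0-\mathbb{E}[Y_0\mid\mathcal{F}_{Z,-k,k}]\|_q\le\nu(k)$ for $k\ge0$, with $\nu(k)\to0$, where $\|\cdot\|_q=\mathbb{E}^{1/q}|\cdot|^q$. *)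

theory Defs
  imports "HOL-Probability.Probability" "HOL-Library.Landau_Symbols"
begin

definition stationary_process ::
  "'a measure \<Rightarrow> 'b measure \<Rightarrow> (int \<Rightarrow> 'a \<Rightarrow> 'b) \<Rightarrow> bool" where
  "stationary_process M N Z \<longleftrightarrow>
     (\<forall>n. Z n \<in> measurable M N) \<and>
     distr M (PiM UNIV (\<lambda>_. N)) (\<lambda>\<omega> n. Z (n + 1) \<omega>)
       = distr M (PiM UNIV (\<lambda>_. N)) (\<lambda>\<omega> n. Z n \<omega>)"

definition gen_sigma ::
  "'a measure \<Rightarrow> 'b measure \<Rightarrow> (int \<Rightarrow> 'a \<Rightarrow> 'b) \<Rightarrow> int \<Rightarrow> int \<Rightarrow> 'a measure" where
  "gen_sigma M N Z s t =
     sigma (space M) (\<Union>u\<in>{s..t}. {Z u -` A \<inter> space M | A. A \<in> sets N})"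

definition Lq_norm :: "'a measure \<Rightarrow> real \<Rightarrow> ('a \<Rightarrow> real) \<Rightarrow> ennreal" where
  "Lq_norm M q f =
     (let I = (\<integral>\<^sup>+ \<omega>. ennreal (\<bar>f \<omega>\<bar> powr q) \<partial>M)
      in if I = \<infinity> then \<infinity> else ennreal (enn2real I powr (1 / q)))"

text \<open>Y is L_q-NED on Z with constants nu: Y is a stationary real process (with
  integrable Y_0, so that the conditional expectation is meaningful), and
  ||Y_0 - E[Y_0 | F_{Z,-k,k}]||_q <= nu k for all k, with nu k -> 0.\<close>
definition NED ::
  "'a measure \<Rightarrow> real \<Rightarrow> 'b measure \<Rightarrow> (int \<Rightarrow> 'a \<Rightarrow> 'b) \<Rightarrow> (int \<Rightarrow> 'a \<Rightarrow> real)
     \<Rightarrow> (nat \<Rightarrow> real) \<Rightarrow> bool" where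
  "NED M q N Z Y \<nu> \<longleftrightarrow>
     stationary_process M borel Y \<and> integrable M (Y 0) \<and>
     (\<forall>k::nat. Lq_norm M q
        (\<lambda>\<omega>. Y 0 \<omega> - real_cond_exp M (gen_sigma M N Z (- int k) (int k)) (Y 0) \<omega>)
        \<le> ennreal (\<nu> k)) \<and>
     \<nu> \<longlonglongrightarrow> 0"

end

theory Submission
  imports Defs
begin

text \<open>Fix k, let F = F_{Z,-k,k}, Y = E[X_0 | F] and s = p(2r - 1). Since |Y|^r is F-measurable
  and conditional expectation is an L2-contraction, the L2-distance from |X_0|^r to
  E[|X_0|^r | F] is at most twice its distance to |Y|^r. By the mean value theorem
  (|X_0|^r - |Y|^r)^2 <= r |X_0 - Y| max(|X_0|, |Y|)^(2r-1), and Hoelder's inequality with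
  exponents q and p bounds the expectation of the right-hand side by
  r ||X_0 - Y||_q (E |X_0|^s + E |Y|^s)^(1/p), where E |Y|^s <= E |X_0|^s by the conditional
  Jensen inequality. Hence the squared L2-NED constant of |X|^r is O(mu(k)) = O(nu(k)).\<close>

lemma convex_on_powr_nonneg:
  fixes s :: real assumes "1 \<le> s"
  shows "convex_on {0..} (\<lambda>x. x powr s)"
proof (rule convex_on_linorderI)
  fix t x y :: real
  assume t: "0 < t" "t < 1" and xy: "x \<in> {0..}" "y \<in> {0..}" "x < y"
  show "((1 - t) *\<^sub>R x + t *\<^sub>R y) powr s \<le> (1 - t) * x powr s + t * y powr s"
  proof (cases "x = 0")
    case True
    have "t powr s \<le> t" using t assms by (intro powr_le_one_le) auto
    with True xy show ?thesis by (simp add: powr_mult mult_right_mono)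
  next
    case False
    with xy t show ?thesis using convex_onD[OF powr_convex[OF assms], of t x y] by simp
  qed
qed simp

lemma convex_on_abs_powr:
  fixes s :: real assumes "1 \<le> s"
  shows "convex_on UNIV (\<lambda>x. \<bar>x\<bar> powr s)"
proof (rule convex_onI)
  fix t x y :: real assume t: "0 < t" "t < 1"
  have "\<bar>(1 - t) *\<^sub>R x + t *\<^sub>R y\<bar> powr s \<le> ((1 - t) *\<^sub>R \<bar>x\<bar> + t *\<^sub>R \<bar>y\<bar>) powr s"
    using t assms by (intro powr_mono2) (auto intro: abs_triangle_ineq[THEN order.trans] simp: abs_mult)
  also have "\<dots> \<le> (1 - t) * \<bar>x\<bar> powr s + t * \<bar>y\<bar> powr s"
    using t by (intro convex_onD[OF convex_on_powr_nonneg[OF assms]]) auto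
  finally show "\<bar>(1 - t) *\<^sub>R x + t *\<^sub>R y\<bar> powr s \<le> (1 - t) * \<bar>x\<bar> powr s + t * \<bar>y\<bar> powr s" .
qed simp

lemma abs_power_diff_le:
  fixes a b :: real assumes "0 \<le> a" "0 \<le> b"
  shows "\<bar>a ^ Suc n - b ^ Suc n\<bar> \<le> Suc n * \<bar>a - b\<bar> * max a b ^ n"
proof (induction n)
  case (Suc n)
  let ?m = "max a b"
  have "a ^ Suc (Suc n) - b ^ Suc (Suc n) = a * (a ^ Suc n - b ^ Suc n) + (a - b) * b ^ Suc n"
    by (simp add: algebra_simps)
  then have "\<bar>a ^ Suc (Suc n) - b ^ Suc (Suc n)\<bar> \<le> a * \<bar>a ^ Suc n - b ^ Suc n\<bar> + \<bar>a - b\<bar> * b ^ Suc n"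
    using assms by (simp add: abs_mult abs_triangle_ineq[THEN order.trans])
  also have "\<dots> \<le> ?m * (Suc n * \<bar>a - b\<bar> * ?m ^ n) + \<bar>a - b\<bar> * ?m ^ Suc n"
    using assms Suc by (intro add_mono mult_mono mult_left_mono power_mono) auto
  also have "\<dots> = Suc (Suc n) * \<bar>a - b\<bar> * ?m ^ Suc n" by (simp add: algebra_simps)
  finally show ?case .
qed simp

text \<open>One factor of the square is bounded by the mean value estimate, the other one by the
  larger power.\<close>
lemma abs_power_diff_squared_le:
  fixes x y :: real assumes "1 \<le> r"
  shows "(\<bar>x\<bar> ^ r - \<bar>y\<bar> ^ r)\<^sup>2 \<le> r * \<bar>x - y\<bar> * max \<bar>x\<bar> \<bar>y\<bar> powr (2 * real r - 1)"
proof -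
  obtain n where r: "r = Suc n" using assms by (cases r) auto
  let ?m = "max \<bar>x\<bar> \<bar>y\<bar>"
  have "\<bar>\<bar>x\<bar> ^ r - \<bar>y\<bar> ^ r\<bar> \<le> r * \<bar>\<bar>x\<bar> - \<bar>y\<bar>\<bar> * ?m ^ n"
    using abs_power_diff_le[of "\<bar>x\<bar>" "\<bar>y\<bar>" n] r by simp
  also have "\<dots> \<le> r * \<bar>x - y\<bar> * ?m ^ n"
    by (intro mult_right_mono mult_left_mono abs_triangle_ineq3) auto
  finally have mean_value: "\<bar>\<bar>x\<bar> ^ r - \<bar>y\<bar> ^ r\<bar> \<le> r * \<bar>x - y\<bar> * ?m ^ n" .
  have "\<bar>x\<bar> ^ r \<le> ?m ^ r" "\<bar>y\<bar> ^ r \<le> ?m ^ r" by (auto intro: power_mono)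
  then have larger_power: "\<bar>\<bar>x\<bar> ^ r - \<bar>y\<bar> ^ r\<bar> \<le> ?m ^ r"
    unfolding abs_le_iff using zero_le_power[of "\<bar>x\<bar>" r] zero_le_power[of "\<bar>y\<bar>" r] by linarith
  have "(\<bar>x\<bar> ^ r - \<bar>y\<bar> ^ r)\<^sup>2 = \<bar>\<bar>x\<bar> ^ r - \<bar>y\<bar> ^ r\<bar> * \<bar>\<bar>x\<bar> ^ r - \<bar>y\<bar> ^ r\<bar>"
    by (simp add: power2_eq_square)
  also have "\<dots> \<le> (r * \<bar>x - y\<bar> * ?m ^ n) * ?m ^ r"
    using mean_value larger_power by (intro mult_mono) (auto simp: le_max_iff_disj)
  also have "\<dots> = r * \<bar>x - y\<bar> * ?m ^ (2 * r - 1)" using r by (simp add: power_add[symmetric] mult_2)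
  also have "?m ^ (2 * r - 1) = ?m powr real (2 * r - 1)"
    using assms by (intro powr_realpow'[symmetric]) auto
  also have "real (2 * r - 1) = 2 * real r - 1" using assms by (simp add: of_nat_diff)
  finally show ?thesis .
qed

lemma abs_power_le_one_plus_abs_powr:
  fixes x s :: real assumes "real r \<le> s"
  shows "\<bar>x\<bar> ^ r \<le> 1 + \<bar>x\<bar> powr s"
proof (cases "\<bar>x\<bar> \<le> 1")
  case True
  then show ?thesis using power_le_one[of "\<bar>x\<bar>" r] by (simp add: add_increasing2)
next
  case False
  then have "\<bar>x\<bar> ^ r = \<bar>x\<bar> powr real r" by (simp add: powr_realpow)
  also have "\<dots> \<le> \<bar>x\<bar> powr s" using False assms by (intro powr_mono) auto
  finally show ?thesis by simp
qed

lemma (in finite_measure) integrable_abs_power_if_abs_powr: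
  fixes f :: "'a \<Rightarrow> real"
  assumes "f \<in> borel_measurable M" "integrable M (\<lambda>x. \<bar>f x\<bar> powr s)" "real r \<le> s"
  shows "integrable M (\<lambda>x. \<bar>f x\<bar> ^ r)"
  by (rule Bochner_Integration.integrable_bound[of _ "\<lambda>x. 1 + \<bar>f x\<bar> powr s"])
     (use assms abs_power_le_one_plus_abs_powr[OF assms(3)] in auto)

lemma moment_exponent_ge:
  fixes p :: real assumes "1 \<le> r" "1 < p"
  shows "real r \<le> p * (2 * real r - 1)" "1 \<le> p * (2 * real r - 1)"
proof -
  have "1 \<le> 2 * real r - 1" using assms(1) by simp
  moreover have "2 * real r - 1 \<le> p * (2 * real r - 1)"
    using calculation assms(2) mult_right_mono[of 1 p "2 * real r - 1"] by simp
  ultimately show "real r \<le> p * (2 * real r - 1)" "1 \<le> p * (2 * real r - 1)" by linarith+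
qed

lemma Holder_inequality_nonneg:
  fixes f g :: "'a \<Rightarrow> real" and p q :: real
  assumes pq: "1 < p" "1 < q" "1/p + 1/q = 1"
    and [measurable]: "f \<in> borel_measurable M" "g \<in> borel_measurable M"
    and nonneg: "\<And>x. 0 \<le> f x" "\<And>x. 0 \<le> g x"
    and f_int: "integrable M (\<lambda>x. f x powr p)" and g_int: "integrable M (\<lambda>x. g x powr q)"
  shows "integrable M (\<lambda>x. f x * g x)"
    and "(\<integral>x. f x * g x \<partial>M) \<le> (\<integral>x. f x powr p \<partial>M) powr (1/p) * (\<integral>x. g x powr q \<partial>M) powr (1/q)"
proof -
  define A where "A = (\<integral>x. f x powr p \<partial>M)"
  define B where "B = (\<integral>x. g x powr q \<partial>M)"
  show fg_int: "integrable M (\<lambda>x. f x * g x)"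
    by (rule Bochner_Integration.integrable_bound[of _ "\<lambda>x. f x powr p / p + g x powr q / q"])
       (use f_int g_int nonneg in \<open>auto intro!: AE_I2 order.trans[OF Youngs_inequality[OF pq] abs_ge_self]\<close>)
  have "A \<ge> 0" "B \<ge> 0" unfolding A_def B_def by auto
  show "(\<integral>x. f x * g x \<partial>M) \<le> A powr (1/p) * B powr (1/q)"
  proof (cases "A = 0 \<or> B = 0")
    case True
    then have "AE x in M. f x powr p = 0 \<or> g x powr q = 0"
      using f_int g_int unfolding A_def B_def by (auto simp: integral_nonneg_eq_0_iff_AE)
    then have "AE x in M. f x * g x = 0" by eventually_elim auto
    then have "(\<integral>x. f x * g x \<partial>M) = 0" by (simp add: integral_eq_zero_AE)
    then show ?thesis by simp
  next
    case False
    with \<open>A \<ge> 0\<close> \<open>B \<ge> 0\<close> have "A > 0" "B > 0" by auto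
    define a where "a = A powr (1/p)"
    define b where "b = B powr (1/q)"
    have "a > 0" "b > 0" using \<open>A > 0\<close> \<open>B > 0\<close> by (simp_all add: a_def b_def)
    have a_p: "a powr p = A" and b_q: "b powr q = B"
      using \<open>A > 0\<close> \<open>B > 0\<close> pq by (simp_all add: a_def b_def powr_powr)
    have pointwise: "f x * g x \<le> a * b * ((1/(p*A)) * f x powr p + (1/(q*B)) * g x powr q)" for x
    proof -
      have "f x * g x = a * b * ((f x / a) * (g x / b))" using \<open>a > 0\<close> \<open>b > 0\<close> by simp
      also have "\<dots> \<le> a * b * ((f x / a) powr p / p + (g x / b) powr q / q)"
        using \<open>a > 0\<close> \<open>b > 0\<close> nonneg by (intro mult_left_mono Youngs_inequality[OF pq]) auto
      also have "\<dots> = a * b * ((1/(p*A)) * f x powr p + (1/(q*B)) * g x powr q)"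
        using \<open>a > 0\<close> \<open>b > 0\<close> nonneg by (simp add: powr_divide a_p b_q mult.commute)
      finally show ?thesis .
    qed
    have "(\<integral>x. f x * g x \<partial>M) \<le> (\<integral>x. a * b * ((1/(p*A)) * f x powr p + (1/(q*B)) * g x powr q) \<partial>M)"
      using fg_int f_int g_int pointwise by (intro integral_mono) auto
    also have "\<dots> = a * b * ((1/(p*A)) * A + (1/(q*B)) * B)"
      using f_int g_int by (simp add: A_def B_def)
    also have "\<dots> = a * b" using \<open>A > 0\<close> \<open>B > 0\<close> pq by simp
    finally show ?thesis by (simp add: a_def b_def)
  qed
qed

lemma integral_abs_power_diff_sq_le:
  fixes f g :: "'a \<Rightarrow> real" and r :: nat and p q :: real
  defines "s \<equiv> p * (2 * real r - 1)"
  assumes r: "1 \<le> r" and pq: "1 < p" "1 < q" "1/p + 1/q = 1"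
    and [measurable]: "f \<in> borel_measurable M" "g \<in> borel_measurable M"
    and f_s: "integrable M (\<lambda>x. \<bar>f x\<bar> powr s)" and g_s: "integrable M (\<lambda>x. \<bar>g x\<bar> powr s)"
    and dist_q: "integrable M (\<lambda>x. \<bar>f x - g x\<bar> powr q)"
  shows "integrable M (\<lambda>x. (\<bar>f x\<bar> ^ r - \<bar>g x\<bar> ^ r)\<^sup>2)"
    and "(\<integral>x. (\<bar>f x\<bar> ^ r - \<bar>g x\<bar> ^ r)\<^sup>2 \<partial>M)
         \<le> r * (\<integral>x. \<bar>f x - g x\<bar> powr q \<partial>M) powr (1/q)
             * ((\<integral>x. \<bar>f x\<bar> powr s \<partial>M) + (\<integral>x. \<bar>g x\<bar> powr s \<partial>M)) powr (1/p)"
proof -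
  define W where "W x = max \<bar>f x\<bar> \<bar>g x\<bar> powr (2 * real r - 1)" for x
  have [measurable]: "W \<in> borel_measurable M" unfolding W_def by measurable
  have W_p_le: "W x powr p \<le> \<bar>f x\<bar> powr s + \<bar>g x\<bar> powr s" for x
  proof -
    have "W x powr p = max \<bar>f x\<bar> \<bar>g x\<bar> powr s" unfolding W_def s_def by (simp add: powr_powr mult.commute)
    then show ?thesis by (simp add: max_def)
  qed
  have W_p: "integrable M (\<lambda>x. W x powr p)"
    by (rule Bochner_Integration.integrable_bound[of _ "\<lambda>x. \<bar>f x\<bar> powr s + \<bar>g x\<bar> powr s"])
       (use f_s g_s W_p_le in auto)
  have "(\<integral>x. W x powr p \<partial>M) \<le> (\<integral>x. \<bar>f x\<bar> powr s + \<bar>g x\<bar> powr s \<partial>M)"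
    using W_p f_s g_s W_p_le by (intro integral_mono) auto
  then have W_p_le_int: "(\<integral>x. W x powr p \<partial>M) \<le> (\<integral>x. \<bar>f x\<bar> powr s \<partial>M) + (\<integral>x. \<bar>g x\<bar> powr s \<partial>M)"
    using f_s g_s by simp
  have qp: "1/q + 1/p = 1" using pq(3) by simp
  note Holder = Holder_inequality_nonneg[OF pq(2,1) qp _ _ _ _ dist_q W_p]
  have pointwise: "(\<bar>f x\<bar> ^ r - \<bar>g x\<bar> ^ r)\<^sup>2 \<le> r * (\<bar>f x - g x\<bar> * W x)" for x
    using abs_power_diff_squared_le[OF r, of "f x" "g x"] by (simp add: W_def mult.assoc)
  have rW_int: "integrable M (\<lambda>x. r * (\<bar>f x - g x\<bar> * W x))"
    using Holder(1) by (simp add: W_def)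
  show diff_sq_int: "integrable M (\<lambda>x. (\<bar>f x\<bar> ^ r - \<bar>g x\<bar> ^ r)\<^sup>2)"
    by (rule Bochner_Integration.integrable_bound[OF rW_int])
       (use pointwise in \<open>auto intro!: AE_I2 order.trans[OF _ abs_ge_self]\<close>)
  have "(\<integral>x. (\<bar>f x\<bar> ^ r - \<bar>g x\<bar> ^ r)\<^sup>2 \<partial>M) \<le> r * (\<integral>x. \<bar>f x - g x\<bar> * W x \<partial>M)"
    using diff_sq_int rW_int pointwise by (subst integral_mult_right_zero[symmetric]) (rule integral_mono)
  also have "\<dots> \<le> r * ((\<integral>x. \<bar>f x - g x\<bar> powr q \<partial>M) powr (1/q) * (\<integral>x. W x powr p \<partial>M) powr (1/p))"
    by (intro mult_left_mono Holder(2)) (auto simp: W_def)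
  also have "\<dots> \<le> r * ((\<integral>x. \<bar>f x - g x\<bar> powr q \<partial>M) powr (1/q)
      * ((\<integral>x. \<bar>f x\<bar> powr s \<partial>M) + (\<integral>x. \<bar>g x\<bar> powr s \<partial>M)) powr (1/p))"
    using W_p_le_int pq by (intro mult_left_mono powr_mono2) (auto simp: W_def)
  finally show "(\<integral>x. (\<bar>f x\<bar> ^ r - \<bar>g x\<bar> ^ r)\<^sup>2 \<partial>M)
      \<le> r * (\<integral>x. \<bar>f x - g x\<bar> powr q \<partial>M) powr (1/q)
          * ((\<integral>x. \<bar>f x\<bar> powr s \<partial>M) + (\<integral>x. \<bar>g x\<bar> powr s \<partial>M)) powr (1/p)"
    by (simp add: mult.assoc)
qed

context sigma_finite_subalgebra
begin

lemma real_cond_exp_abs_powr: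
  fixes f :: "'a \<Rightarrow> real"
  assumes "1 \<le> s" "integrable M f" "integrable M (\<lambda>x. \<bar>f x\<bar> powr s)"
  shows "integrable M (\<lambda>x. \<bar>real_cond_exp M F f x\<bar> powr s)"
    and "(\<integral>x. \<bar>real_cond_exp M F f x\<bar> powr s \<partial>M) \<le> (\<integral>x. \<bar>f x\<bar> powr s \<partial>M)"
proof -
  have Jensen: "AE x in M. \<bar>real_cond_exp M F f x\<bar> powr s \<le> real_cond_exp M F (\<lambda>x. \<bar>f x\<bar> powr s) x"
    by (rule real_cond_exp_jensens_inequality(2)[of f UNIV 0 0])
       (use assms convex_on_abs_powr[OF assms(1)] in auto)
  show cond_exp_int: "integrable M (\<lambda>x. \<bar>real_cond_exp M F f x\<bar> powr s)"
    by (rule Bochner_Integration.integrable_bound[OF real_cond_exp_int(1)[OF assms(3)]])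
       (use Jensen in auto)
  have "(\<integral>x. \<bar>real_cond_exp M F f x\<bar> powr s \<partial>M) \<le> (\<integral>x. real_cond_exp M F (\<lambda>x. \<bar>f x\<bar> powr s) x \<partial>M)"
    by (rule integral_mono_AE[OF cond_exp_int real_cond_exp_int(1)[OF assms(3)] Jensen])
  also have "\<dots> = (\<integral>x. \<bar>f x\<bar> powr s \<partial>M)" by (rule real_cond_exp_int(2)[OF assms(3)])
  finally show "(\<integral>x. \<bar>real_cond_exp M F f x\<bar> powr s \<partial>M) \<le> (\<integral>x. \<bar>f x\<bar> powr s \<partial>M)" .
qed

lemma real_cond_exp_L2_dist_le:
  fixes f U :: "'a \<Rightarrow> real"
  assumes f: "integrable M f" and U: "U \<in> borel_measurable F" "integrable M U"
    and h_sq: "integrable M (\<lambda>x. (f x - U x)\<^sup>2)"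
  shows "integrable M (\<lambda>x. (f x - real_cond_exp M F f x)\<^sup>2)"
    and "(\<integral>x. (f x - real_cond_exp M F f x)\<^sup>2 \<partial>M) \<le> 4 * (\<integral>x. (f x - U x)\<^sup>2 \<partial>M)"
proof -
  define h where "h x = f x - U x" for x
  have h: "integrable M h" unfolding h_def using f U by simp
  have h_powr: "integrable M (\<lambda>x. \<bar>h x\<bar> powr 2)" using h_sq by (simp add: h_def)
  have Eh_sq: "integrable M (\<lambda>x. (real_cond_exp M F h x)\<^sup>2)"
    and Eh_sq_le: "(\<integral>x. (real_cond_exp M F h x)\<^sup>2 \<partial>M) \<le> (\<integral>x. (h x)\<^sup>2 \<partial>M)"
    using real_cond_exp_abs_powr[OF _ h h_powr] by simp_all
  have "AE x in M. real_cond_exp M F h x = real_cond_exp M F f x - U x"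
    using real_cond_exp_diff[OF f U(2)] real_cond_exp_F_meas[OF U(2,1)] unfolding h_def
    by eventually_elim simp
  then have pointwise: "AE x in M. (f x - real_cond_exp M F f x)\<^sup>2 \<le> 2 * (h x)\<^sup>2 + 2 * (real_cond_exp M F h x)\<^sup>2"
  proof eventually_elim
    case (elim x)
    have "2 * (h x)\<^sup>2 + 2 * (real_cond_exp M F h x)\<^sup>2 - (h x - real_cond_exp M F h x)\<^sup>2
        = (h x + real_cond_exp M F h x)\<^sup>2"
      by (simp add: power2_eq_square algebra_simps)
    with elim show ?case unfolding h_def by (smt (verit) zero_le_power2)
  qed
  have bound_int: "integrable M (\<lambda>x. 2 * (h x)\<^sup>2 + 2 * (real_cond_exp M F h x)\<^sup>2)"
    using h_sq Eh_sq by (simp add: h_def)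
  show diff_sq_int: "integrable M (\<lambda>x. (f x - real_cond_exp M F f x)\<^sup>2)"
    by (rule Bochner_Integration.integrable_bound[OF bound_int]) (use f pointwise in auto)
  have "(\<integral>x. (f x - real_cond_exp M F f x)\<^sup>2 \<partial>M)
      \<le> (\<integral>x. 2 * (h x)\<^sup>2 + 2 * (real_cond_exp M F h x)\<^sup>2 \<partial>M)"
    by (rule integral_mono_AE[OF diff_sq_int bound_int pointwise])
  also have "\<dots> = 2 * (\<integral>x. (h x)\<^sup>2 \<partial>M) + 2 * (\<integral>x. (real_cond_exp M F h x)\<^sup>2 \<partial>M)"
    using h_sq Eh_sq by (simp add: h_def)
  also have "\<dots> \<le> 4 * (\<integral>x. (h x)\<^sup>2 \<partial>M)" using Eh_sq_le by simp
  finally show "(\<integral>x. (f x - real_cond_exp M F f x)\<^sup>2 \<partial>M) \<le> 4 * (\<integral>x. (f x - U x)\<^sup>2 \<partial>M)"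
    by (simp add: h_def)
qed

end

lemma Lq_norm_le_iff:
  fixes f :: "'a \<Rightarrow> real"
  assumes [measurable]: "f \<in> borel_measurable M" and "0 \<le> m"
  shows "Lq_norm M q f \<le> ennreal m \<longleftrightarrow>
    integrable M (\<lambda>x. \<bar>f x\<bar> powr q) \<and> (\<integral>x. \<bar>f x\<bar> powr q \<partial>M) powr (1/q) \<le> m"
proof (cases "integrable M (\<lambda>x. \<bar>f x\<bar> powr q)")
  case True
  then have "(\<integral>\<^sup>+x. ennreal (\<bar>f x\<bar> powr q) \<partial>M) = ennreal (\<integral>x. \<bar>f x\<bar> powr q \<partial>M)"
    by (intro nn_integral_eq_integral) auto
  then show ?thesis using True \<open>0 \<le> m\<close> by (simp add: Lq_norm_def)
next
  case False
  then have "(\<integral>\<^sup>+x. ennreal (\<bar>f x\<bar> powr q) \<partial>M) = \<infinity>"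
    using integrable_iff_bounded[of M "\<lambda>x. \<bar>f x\<bar> powr q"] by (auto simp flip: less_top)
  then show ?thesis using False by (simp add: Lq_norm_def top_unique)
qed

lemma (in finite_measure_subalgebra) Lq_norm_abs_power_real_cond_exp_le:
  fixes f :: "'a \<Rightarrow> real" and r :: nat and p q m :: real
  defines "s \<equiv> p * (2 * real r - 1)"
  assumes r: "1 \<le> r" and pq: "1 < p" "1 < q" "1/p + 1/q = 1"
    and f: "integrable M f" and f_s: "integrable M (\<lambda>x. \<bar>f x\<bar> powr s)"
    and dist_q: "Lq_norm M q (\<lambda>x. f x - real_cond_exp M F f x) \<le> ennreal m" and "0 \<le> m"
  shows "Lq_norm M 2 (\<lambda>x. \<bar>f x\<bar> ^ r - real_cond_exp M F (\<lambda>x. \<bar>f x\<bar> ^ r) x)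
    \<le> ennreal (sqrt (4 * real r * (2 * (\<integral>x. \<bar>f x\<bar> powr s \<partial>M)) powr (1/p) * m))"
proof -
  define Y where "Y = real_cond_exp M F f"
  define S where "S = (\<integral>x. \<bar>f x\<bar> powr s \<partial>M)"
  have [measurable]: "f \<in> borel_measurable M" "Y \<in> borel_measurable M" "Y \<in> borel_measurable F"
    using f by (simp_all add: Y_def)
  have s_ge: "real r \<le> s" "1 \<le> s" using moment_exponent_ge[OF r pq(1)] by (simp_all add: s_def)
  have Y_s: "integrable M (\<lambda>x. \<bar>Y x\<bar> powr s)" and Y_S: "(\<integral>x. \<bar>Y x\<bar> powr s \<partial>M) \<le> S"
    using real_cond_exp_abs_powr[OF s_ge(2) f f_s] by (simp_all add: Y_def S_def)
  have dist_q': "integrable M (\<lambda>x. \<bar>f x - Y x\<bar> powr q)"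
    and dist_q_le: "(\<integral>x. \<bar>f x - Y x\<bar> powr q \<partial>M) powr (1/q) \<le> m"
    using dist_q Lq_norm_le_iff[of _ M m q] \<open>0 \<le> m\<close> by (simp_all add: Y_def)
  note diff_sq = integral_abs_power_diff_sq_le[OF r pq _ _ f_s[unfolded s_def] Y_s[unfolded s_def] dist_q',
      folded s_def S_def]
  have f_r: "integrable M (\<lambda>x. \<bar>f x\<bar> ^ r)" and Y_r: "integrable M (\<lambda>x. \<bar>Y x\<bar> ^ r)"
    using integrable_abs_power_if_abs_powr s_ge(1) f_s Y_s by simp_all
  note L2 = real_cond_exp_L2_dist_le[OF f_r _ Y_r diff_sq(1)]
  have "(\<integral>x. (\<bar>f x\<bar> ^ r - real_cond_exp M F (\<lambda>x. \<bar>f x\<bar> ^ r) x)\<^sup>2 \<partial>M)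
      \<le> 4 * (\<integral>x. (\<bar>f x\<bar> ^ r - \<bar>Y x\<bar> ^ r)\<^sup>2 \<partial>M)"
    by (rule L2(2)) measurable
  also have "\<dots> \<le> 4 * (r * (\<integral>x. \<bar>f x - Y x\<bar> powr q \<partial>M) powr (1/q) * (S + (\<integral>x. \<bar>Y x\<bar> powr s \<partial>M)) powr (1/p))"
    using diff_sq(2) by simp
  also have "\<dots> \<le> 4 * (r * m * (2 * S) powr (1/p))"
    using dist_q_le Y_S pq \<open>0 \<le> m\<close> by (intro mult_left_mono mult_mono powr_mono2) (auto simp: S_def)
  finally have "(\<integral>x. (\<bar>f x\<bar> ^ r - real_cond_exp M F (\<lambda>x. \<bar>f x\<bar> ^ r) x)\<^sup>2 \<partial>M)
      \<le> 4 * (r * m * (2 * S) powr (1/p))" .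
  moreover have "integrable M (\<lambda>x. (\<bar>f x\<bar> ^ r - real_cond_exp M F (\<lambda>x. \<bar>f x\<bar> ^ r) x)\<^sup>2)"
    by (rule L2(1)) measurable
  ultimately show ?thesis
    using \<open>0 \<le> m\<close> by (subst Lq_norm_le_iff) (auto simp: S_def powr_half_sqrt mult_ac)
qed

lemma sqrt_bigo_sqrt:
  fixes \<mu> \<nu> :: "nat \<Rightarrow> real"
  assumes "\<mu> \<in> O(\<nu>)"
  shows "(\<lambda>k. sqrt (C * \<bar>\<mu> k\<bar>)) \<in> O(\<lambda>k. sqrt (\<nu> k))"
proof -
  have "(\<lambda>k. \<bar>\<mu> k\<bar> powr (1/2)) \<in> O(\<lambda>k. \<bar>\<nu> k\<bar> powr (1/2))" by (rule bigo_powr[OF assms]) simp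
  moreover have "\<bar>x\<bar> powr (1/2) = \<bar>sqrt x\<bar>" for x :: real
    by (cases "x \<ge> 0") (simp_all add: powr_half_sqrt real_sqrt_minus)
  ultimately have "(\<lambda>k. sqrt \<bar>\<mu> k\<bar>) \<in> O(\<lambda>k. sqrt (\<nu> k))" by (simp add: powr_half_sqrt)
  then have "(\<lambda>k. sqrt C * sqrt \<bar>\<mu> k\<bar>) \<in> O(\<lambda>k. sqrt C * sqrt (\<nu> k))" by (rule landau_o.big.mult_left)
  then show ?thesis by (cases "C = 0") (simp_all add: real_sqrt_mult)
qed

lemma stationary_process_comp:
  fixes X :: "int \<Rightarrow> 'a \<Rightarrow> 'b"
  assumes X: "stationary_process M N X" and g[measurable]: "g \<in> measurable N N'"
  shows "stationary_process M N' (\<lambda>n \<omega>. g (X n \<omega>))"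
proof -
  let ?P = "\<lambda>N. PiM (UNIV :: int set) (\<lambda>_. N)"
  have X_n[measurable]: "X n \<in> measurable M N" for n using X by (simp add: stationary_process_def)
  have shift: "distr M (?P N) (\<lambda>\<omega> n. X (n + 1) \<omega>) = distr M (?P N) (\<lambda>\<omega> n. X n \<omega>)"
    using X by (simp add: stationary_process_def)
  have G: "(\<lambda>x n. g (x n)) \<in> measurable (?P N) (?P N')"
    by (rule measurable_PiM_single') (auto intro: measurable_space[OF g] simp: space_PiM)
  have paths: "(\<lambda>\<omega> n. X (n + k) \<omega>) \<in> measurable M (?P N)" for k
    by (rule measurable_PiM_single') (auto intro: measurable_space[OF X_n])
  have "distr M (?P N') (\<lambda>\<omega> n. g (X (n + 1) \<omega>)) = distr (distr M (?P N) (\<lambda>\<omega> n. X (n + 1) \<omega>)) (?P N') (\<lambda>x n. g (x n))"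
    using distr_distr[OF G paths[of 1]] by (simp add: comp_def)
  also have "\<dots> = distr M (?P N') (\<lambda>\<omega> n. g (X n \<omega>))"
    using distr_distr[OF G paths[of 0]] by (simp add: shift comp_def)
  finally show ?thesis unfolding stationary_process_def by simp
qed

lemma subalgebra_gen_sigma:
  assumes "\<And>u. Z u \<in> measurable M N"
  shows "subalgebra M (gen_sigma M N Z s t)"
proof -
  let ?G = "\<Union>u\<in>{s..t}. {Z u -` A \<inter> space M | A. A \<in> sets N}"
  have G: "?G \<subseteq> sets M" using assms by (auto intro: measurable_sets)
  then have "sets (gen_sigma M N Z s t) = sigma_sets (space M) ?G"
    unfolding gen_sigma_def using sets.sets_into_space by (intro sets_measure_of) blast
  moreover have "space (gen_sigma M N Z s t) = space M"
    unfolding gen_sigma_def by (simp add: space_measure_of_conv)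
  ultimately show ?thesis
    unfolding subalgebra_def using sets.sigma_sets_subset[OF G] by simp
qed

lemma NED_abs_power:
  fixes M :: "'a measure" and Z :: "int \<Rightarrow> 'a \<Rightarrow> 'b" and X :: "int \<Rightarrow> 'a \<Rightarrow> real"
    and \<mu> :: "nat \<Rightarrow> real" and r :: nat and p q :: real
  assumes "prob_space M" and Z: "\<And>u. Z u \<in> measurable M N" and NED_q: "NED M q N Z X \<mu>"
    and r: "1 \<le> r" and pq: "1 < p" "1 < q" "1/p + 1/q = 1"
    and X_moment: "integrable M (\<lambda>\<omega>. \<bar>X 0 \<omega>\<bar> powr (p * (2 * real r - 1)))"
  shows "NED M 2 N Z (\<lambda>n \<omega>. \<bar>X n \<omega>\<bar> ^ r)
    (\<lambda>k. sqrt (4 * real r * (2 * (\<integral>\<omega>. \<bar>X 0 \<omega>\<bar> powr (p * (2 * real r - 1)) \<partial>M)) powr (1/p) * \<bar>\<mu> k\<bar>))"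
    (is "NED M 2 N Z _ (\<lambda>k. sqrt (?C * \<bar>\<mu> k\<bar>))")
  unfolding NED_def
proof (intro conjI allI)
  interpret prob_space M by fact
  have X: "stationary_process M borel X" "integrable M (X 0)"
    and dist_q: "\<And>k. Lq_norm M q (\<lambda>\<omega>. X 0 \<omega> - real_cond_exp M (gen_sigma M N Z (- int k) (int k)) (X 0) \<omega>)
                   \<le> ennreal (\<mu> k)"
    using NED_q unfolding NED_def by auto
  show "stationary_process M borel (\<lambda>n \<omega>. \<bar>X n \<omega>\<bar> ^ r)"
    by (rule stationary_process_comp[OF X(1)]) measurable
  show "integrable M (\<lambda>\<omega>. \<bar>X 0 \<omega>\<bar> ^ r)"
    using X(2) X_moment moment_exponent_ge[OF r pq(1)] by (intro integrable_abs_power_if_abs_powr) auto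
  fix k
  interpret finite_measure_subalgebra M "gen_sigma M N Z (- int k) (int k)"
    by unfold_locales (rule subalgebra_gen_sigma[OF Z])
  show "Lq_norm M 2 (\<lambda>\<omega>. \<bar>X 0 \<omega>\<bar> ^ r - real_cond_exp M (gen_sigma M N Z (- int k) (int k)) (\<lambda>\<omega>. \<bar>X 0 \<omega>\<bar> ^ r) \<omega>)
      \<le> ennreal (sqrt (?C * \<bar>\<mu> k\<bar>))"
    by (rule Lq_norm_abs_power_real_cond_exp_le[OF r pq X(2) X_moment order.trans[OF dist_q]])
       (auto intro: ennreal_leI)
next
  have "\<mu> \<longlonglongrightarrow> 0" using NED_q by (simp add: NED_def)
  then show "(\<lambda>k. sqrt (?C * \<bar>\<mu> k\<bar>)) \<longlonglongrightarrow> 0"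
    using tendsto_real_sqrt[OF tendsto_mult_left[OF tendsto_rabs]] by fastforce
qed

theorem corollary7:
  fixes M :: "'a measure" and N :: "'b measure"
    and Z :: "int \<Rightarrow> 'a \<Rightarrow> 'b" and X :: "int \<Rightarrow> 'a \<Rightarrow> real"
    and \<nu> \<mu> :: "nat \<Rightarrow> real" and r :: nat and p q :: real
  assumes "prob_space M"
    and "stationary_process M N Z"
    and "NED M 2 N Z X \<nu>"
    and "r \<ge> 1"
    and "1 < p" and "1 < q" and "1 / p + 1 / q = 1"
    and "\<forall>n. (\<integral>\<^sup>+ \<omega>. ennreal (\<bar>X n \<omega>\<bar> powr (p * (2 * real r - 1))) \<partial>M) < \<infinity>"
    and "NED M q N Z X \<mu>"
    and "\<mu> \<in> O(\<nu>)"
  shows "\<exists>c. NED M 2 N Z (\<lambda>n \<omega>. \<bar>X n \<omega>\<bar> ^ r) c \<and> c \<in> O(\<lambda>k. sqrt (\<nu> k))"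
proof -
  have Z: "\<And>u. Z u \<in> measurable M N" using assms(2) by (simp add: stationary_process_def)
  have [measurable]: "X 0 \<in> borel_measurable M" using assms(9) by (simp add: NED_def borel_measurable_integrable)
  have "integrable M (\<lambda>\<omega>. \<bar>X 0 \<omega>\<bar> powr (p * (2 * real r - 1)))"
    using assms(8) by (intro integrableI_bounded) auto
  from NED_abs_power[OF assms(1) Z assms(9,4-7) this] sqrt_bigo_sqrt[OF assms(10)]
  show ?thesis by blast
qed

end
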